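(* Let $p$ be an odd prime and $\mathbb O$ Zorn's split octonion algebra over $\mathbb Q_p$. The lattice $\Lambda[0,1,-1,0,-1,1,0,0]$, i.e. the set of $\begin{pmatrix}x&(y_1,y_2,y_3)\\ (z_1,z_2,z_3)&w\end{pmatrix}$ with $x,w,y_3,z_3\in\mathbb Z_p$, $y_1,z_2\in p\mathbb Z_p$, $y_2,z_1\in p^{-1}\mathbb Z_p$, is a maximal order in $\mathbb O$.
   Context: Zorn's split octonion algebra $\mathbb O$ over a field $k$ is the set of formal matrices $\begin{pmatrix}a&\vec v\\ \vec w&d\end{pmatrix}$ with $a,d\in k$, $\vec v,\vec w\in k^3$, with entrywise addition and multiplication $\begin{pmatrix}a&\vec v\\ \vec w&d\end{pmatrix}\begin{pmatrix}\alpha&\vec\phi\\ \vec\psi&\delta\end{pmatrix}=\begin{pmatrix}a\alpha+\vec v\cdot\vec\psi & a\vec\phi+\delta\vec v-\vec w\times\vec\psi\\ \alpha\vec w+d\vec\psi+\vec v\times\vec\phi & d\delta+\vec w\cdot\vec\phi\end{pmatrix}$ (standard dot and cross products). For integers $a_1,\dots,a_8$, $\Lambda[a_1,\dots,a_8]$ is the set of $\begin{pmatrix}x&(y_1,y_2,y_3)\\ (z_1,z_2,z_3)&w\end{pmatrix}$ with $x\in p^{a_1}\mathbb Z_p$, $y_i\in p^{a_{i+1}}\mathbb Z_p$, $z_i\in p^{a_{i+4}}\mathbb Z_p$, $w\in p^{a_8}\mathbb Z_p$. A lattice is a finitely generated $\mathbb Z_p$-submodule spanning $\mathbb O$ over $\mathbb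 Q_p$; an order is a lattice that contains $\mathbf 1$ and is closed under multiplication; a maximal order is an order not properly contained in any other order. *)

theory Defs
  imports Complex_Main "HOL-Computational_Algebra.Primes"
begin

definition pval :: "nat \<Rightarrow> rat \<Rightarrow> int" where
  "pval p q = (case quotient_of q of (a, b) \<Rightarrow>
      int (multiplicity (int p) a) - int (multiplicity (int p) b))"

definition padic_abs :: "nat \<Rightarrow> rat \<Rightarrow> real" where
  "padic_abs p q = (if q = 0 then 0 else real p powr (- real_of_int (pval p q)))"

definition pcauchy :: "nat \<Rightarrow> (nat \<Rightarrow> rat) \<Rightarrow> bool" where
  "pcauchy p X = (\<forall>e>0. \<exists>N. \<forall>m\<ge>N. \<forall>n\<ge>N. padic_abs p (X m - X n) < e)"

definition padic_rel :: "nat \<Rightarrow> ((nat \<Rightarrow> rat) \<times> (nat \<Rightarrow> rat)) set" where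
  "padic_rel p = {(X, Y). pcauchy p X \<and> pcauchy p Y \<and>
       (\<lambda>n. padic_abs p (X n - Y n)) \<longlonglongrightarrow> 0}"

type_synonym qp = "(nat \<Rightarrow> rat) set"

definition Qp :: "nat \<Rightarrow> qp set" where
  "Qp p = {X. pcauchy p X} // padic_rel p"

definition qp_rep :: "qp \<Rightarrow> nat \<Rightarrow> rat" where
  "qp_rep A = (SOME X. X \<in> A)"

definition qp_class :: "nat \<Rightarrow> (nat \<Rightarrow> rat) \<Rightarrow> qp" where
  "qp_class p X = padic_rel p `` {X}"

definition qp_of_rat :: "nat \<Rightarrow> rat \<Rightarrow> qp" where
  "qp_of_rat p r = qp_class p (\<lambda>n. r)"

definition qp_add :: "nat \<Rightarrow> qp \<Rightarrow> qp \<Rightarrow> qp" where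
  "qp_add p A B = qp_class p (\<lambda>n. qp_rep A n + qp_rep B n)"

definition qp_mult :: "nat \<Rightarrow> qp \<Rightarrow> qp \<Rightarrow> qp" where
  "qp_mult p A B = qp_class p (\<lambda>n. qp_rep A n * qp_rep B n)"

definition qp_diff :: "nat \<Rightarrow> qp \<Rightarrow> qp \<Rightarrow> qp" where
  "qp_diff p A B = qp_class p (\<lambda>n. qp_rep A n - qp_rep B n)"

definition qp_norm :: "nat \<Rightarrow> qp \<Rightarrow> real" where
  "qp_norm p A = lim (\<lambda>n. padic_abs p (qp_rep A n))"

definition Zp :: "nat \<Rightarrow> qp set" where
  "Zp p = {A \<in> Qp p. qp_norm p A \<le> 1}"

definition pZp :: "nat \<Rightarrow> int \<Rightarrow> qp set" where
  "pZp p a = {qp_mult p (qp_of_rat p (of_nat p powi a)) z | z. z \<in> Zp p}"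

datatype 'a zorn = Zorn 'a "'a \<times> 'a \<times> 'a" "'a \<times> 'a \<times> 'a" 'a

type_synonym vec3 = "qp \<times> qp \<times> qp"

definition v1 :: "vec3 \<Rightarrow> qp" where "v1 v = fst v"
definition v2 :: "vec3 \<Rightarrow> qp" where "v2 v = fst (snd v)"
definition v3 :: "vec3 \<Rightarrow> qp" where "v3 v = snd (snd v)"

definition vdot :: "nat \<Rightarrow> vec3 \<Rightarrow> vec3 \<Rightarrow> qp" where
  "vdot p v w = qp_add p (qp_add p (qp_mult p (v1 v) (v1 w)) (qp_mult p (v2 v) (v2 w)))
                         (qp_mult p (v3 v) (v3 w))"

definition vcross :: "nat \<Rightarrow> vec3 \<Rightarrow> vec3 \<Rightarrow> vec3" where
  "vcross p v w =
     (qp_diff p (qp_mult p (v2 v) (v3 w)) (qp_mult p (v3 v) (v2 w)),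
      qp_diff p (qp_mult p (v3 v) (v1 w)) (qp_mult p (v1 v) (v3 w)),
      qp_diff p (qp_mult p (v1 v) (v2 w)) (qp_mult p (v2 v) (v1 w)))"

definition vadd :: "nat \<Rightarrow> vec3 \<Rightarrow> vec3 \<Rightarrow> vec3" where
  "vadd p v w = (qp_add p (v1 v) (v1 w), qp_add p (v2 v) (v2 w), qp_add p (v3 v) (v3 w))"

definition vsub :: "nat \<Rightarrow> vec3 \<Rightarrow> vec3 \<Rightarrow> vec3" where
  "vsub p v w = (qp_diff p (v1 v) (v1 w), qp_diff p (v2 v) (v2 w), qp_diff p (v3 v) (v3 w))"

definition vsmul :: "nat \<Rightarrow> qp \<Rightarrow> vec3 \<Rightarrow> vec3" where
  "vsmul p c v = (qp_mult p c (v1 v), qp_mult p c (v2 v), qp_mult p c (v3 v))"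

fun zmult :: "nat \<Rightarrow> qp zorn \<Rightarrow> qp zorn \<Rightarrow> qp zorn" where
  "zmult p (Zorn a v w d) (Zorn \<alpha> \<phi> \<psi> \<delta>) =
     Zorn (qp_add p (qp_mult p a \<alpha>) (vdot p v \<psi>))
          (vsub p (vadd p (vsmul p a \<phi>) (vsmul p \<delta> v)) (vcross p w \<psi>))
          (vadd p (vadd p (vsmul p \<alpha> w) (vsmul p d \<psi>)) (vcross p v \<phi>))
          (qp_add p (qp_mult p d \<delta>) (vdot p w \<phi>))"

fun zadd :: "nat \<Rightarrow> qp zorn \<Rightarrow> qp zorn \<Rightarrow> qp zorn" where
  "zadd p (Zorn a v w d) (Zorn \<alpha> \<phi> \<psi> \<delta>) =
     Zorn (qp_add p a \<alpha>) (vadd p v \<phi>) (vadd p w \<psi>) (qp_add p d \<delta>)"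

fun zsmul :: "nat \<Rightarrow> qp \<Rightarrow> qp zorn \<Rightarrow> qp zorn" where
  "zsmul p c (Zorn a v w d) = Zorn (qp_mult p c a) (vsmul p c v) (vsmul p c w) (qp_mult p c d)"

definition zzero :: "nat \<Rightarrow> qp zorn" where
  "zzero p = (let z = qp_of_rat p 0 in Zorn z (z, z, z) (z, z, z) z)"

definition zone :: "nat \<Rightarrow> qp zorn" where
  "zone p = (let z = qp_of_rat p 0; u = qp_of_rat p 1 in Zorn u (z, z, z) (z, z, z) u)"

definition Oct :: "nat \<Rightarrow> qp zorn set" where
  "Oct p = {Zorn a (y1, y2, y3) (z1, z2, z3) d | a y1 y2 y3 z1 z2 z3 d.
      a \<in> Qp p \<and> y1 \<in> Qp p \<and> y2 \<in> Qp p \<and> y3 \<in> Qp p \<and>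
      z1 \<in> Qp p \<and> z2 \<in> Qp p \<and> z3 \<in> Qp p \<and> d \<in> Qp p}"

definition zspan :: "nat \<Rightarrow> qp set \<Rightarrow> qp zorn set \<Rightarrow> qp zorn set" where
  "zspan p C S = {x. \<exists>xs cs. set xs \<subseteq> S \<and> length cs = length xs \<and> set cs \<subseteq> C \<and>
       x = foldr (zadd p) (map2 (zsmul p) cs xs) (zzero p)}"

definition is_lattice :: "nat \<Rightarrow> qp zorn set \<Rightarrow> bool" where
  "is_lattice p L \<longleftrightarrow> L \<subseteq> Oct p \<and>
     (\<exists>S. finite S \<and> S \<subseteq> L \<and> L = zspan p (Zp p) S) \<and>
     zspan p (Qp p) L = Oct p"

definition is_order :: "nat \<Rightarrow> qp zorn set \<Rightarrow> bool" where
  "is_order p L \<longleftrightarrow> is_lattice p L \<and> zone p \<in> L \<and> (\<forall>x\<in>L. \<forall>y\<in>L. zmult p x y \<in> L)"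

definition is_maximal_order :: "nat \<Rightarrow> qp zorn set \<Rightarrow> bool" where
  "is_maximal_order p L \<longleftrightarrow> is_order p L \<and> (\<forall>L'. is_order p L' \<and> L \<subseteq> L' \<longrightarrow> L' = L)"

text \<open>Lambda[a1,...,a8] (list of length 8; index i-1 holds a_i).\<close>
definition Lambda :: "nat \<Rightarrow> int list \<Rightarrow> qp zorn set" where
  "Lambda p as = {Zorn x (y1, y2, y3) (z1, z2, z3) w | x y1 y2 y3 z1 z2 z3 w.
      x \<in> pZp p (as ! 0) \<and> y1 \<in> pZp p (as ! 1) \<and> y2 \<in> pZp p (as ! 2) \<and> y3 \<in> pZp p (as ! 3) \<and>
      z1 \<in> pZp p (as ! 4) \<and> z2 \<in> pZp p (as ! 5) \<and> z3 \<in> pZp p (as ! 6) \<and> w \<in> pZp p (as ! 7)}"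

end

theory Submission
  imports Defs
begin

(* For octonions, coordinates that lie in sets closed under the linear operations stay there
   under Z_p-spans (zspan_coordwise).  This shows that every Lambda[a1..a8] is a lattice
   with basis (p^(a_i) e_i); for Lambda[0,1,-1,0,-1,1,0,0] every monomial of the
   multiplication table has exponents adding up to the exponent of its target coordinate,
   so this lattice is an order.

   Maximality: an order L' containing it has bounded coordinates (being finitely generated).
   Sandwiching an element between the idempotent diag(1,0) (resp. diag(0,1)) isolates its
   top-left (resp. bottom-right) coordinate inside a multiplicative copy of Q_p in L'; as all
   powers of that coordinate stay bounded, it lies in Z_p.  Multiplying by the basis vectors
   of the order moves every off-diagonal coordinate, rescaled by the appropriate power of p,
   into the top-left slot, which yields exactly the defining bounds of the order.  The proof
   works for every prime p. *)

locale padic =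
  fixes p :: nat
  assumes prime_p: "prime p"
begin

section \<open>The p-adic valuation and absolute value on the rationals\<close>

abbreviation vp :: "int \<Rightarrow> int" where "vp a \<equiv> int (multiplicity (int p) a)"

lemma p_gt_1: "p > 1"
  using prime_p prime_gt_1_nat by blast

lemma prime_elem_p: "prime_elem (int p)"
  using prime_p by auto

lemma vp_mult: "a \<noteq> 0 \<Longrightarrow> b \<noteq> 0 \<Longrightarrow> vp (a * b) = vp a + vp b"
  using prime_elem_multiplicity_mult_distrib[OF prime_elem_p] by simp

lemma pval_frac:
  assumes c: "c \<noteq> 0" and d: "d \<noteq> 0"
  shows "pval p (of_int c / of_int d) = vp c - vp d"
proof -
  obtain a b where q: "quotient_of (of_int c / of_int d) = (a, b)"
    by (cases "quotient_of (of_int c / of_int d)") auto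
  have b: "b > 0" using quotient_of_denom_pos[OF q] .
  have e: "of_int c / of_int d = (of_int a / of_int b :: rat)" using quotient_of_div[OF q] .
  have a: "a \<noteq> 0" using e c d b by auto
  have "of_int (a * d) = (of_int (c * b) :: rat)" using e b d by (simp add: field_simps)
  hence "a * d = c * b" by linarith
  hence "vp a + vp d = vp c + vp b" using vp_mult[of a d] vp_mult[of c b] a b c d by simp
  thus ?thesis unfolding pval_def q by simp
qed

lemma rat_as_frac:
  fixes q :: rat
  assumes "q \<noteq> 0"
  obtains c d where "c \<noteq> 0" "d \<noteq> 0" "q = of_int c / of_int d"
proof -
  obtain a b where ab: "quotient_of q = (a, b)" by (cases "quotient_of q") auto
  have "b > 0" using quotient_of_denom_pos[OF ab] .
  moreover have "q = of_int a / of_int b" using quotient_of_div[OF ab] .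
  moreover have "a \<noteq> 0" using calculation assms by auto
  ultimately show ?thesis using that[of a b] by auto
qed

lemma pval_mult: "x \<noteq> 0 \<Longrightarrow> y \<noteq> 0 \<Longrightarrow> pval p (x * y) = pval p x + pval p y"
proof -
  assume x: "x \<noteq> 0" and y: "y \<noteq> 0"
  obtain a b where ab: "a \<noteq> 0" "b \<noteq> 0" "x = of_int a / of_int b" using rat_as_frac[OF x] by blast
  obtain c d where cd: "c \<noteq> 0" "d \<noteq> 0" "y = of_int c / of_int d" using rat_as_frac[OF y] by blast
  have "x * y = of_int (a * c) / of_int (b * d)" using ab cd by simp
  moreover have "pval p (of_int (a * c) / of_int (b * d)) = vp (a * c) - vp (b * d)"
    using ab cd by (intro pval_frac) auto
  ultimately show ?thesis using pval_frac[of a b] pval_frac[of c d] ab cd vp_mult by simp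
qed

lemma pval_add:
  assumes "x \<noteq> 0" "y \<noteq> 0" "x + y \<noteq> 0"
  shows "pval p (x + y) \<ge> min (pval p x) (pval p y)"
proof -
  obtain a b where ab: "a \<noteq> 0" "b \<noteq> 0" "x = of_int a / of_int b" using rat_as_frac[OF assms(1)] by blast
  obtain c d where cd: "c \<noteq> 0" "d \<noteq> 0" "y = of_int c / of_int d" using rat_as_frac[OF assms(2)] by blast
  have x: "x = of_int (a * d) / of_int (b * d)" and y: "y = of_int (c * b) / of_int (b * d)"
    using ab cd by simp_all
  have s: "x + y = of_int (a * d + c * b) / of_int (b * d)"
    using ab cd by (simp add: add_frac_eq mult.commute)
  have nz: "a * d + c * b \<noteq> 0"
  proof
    assume "a * d + c * b = 0"
    thus False using s assms(3) by simp
  qed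
  define k where "k = min (multiplicity (int p) (a * d)) (multiplicity (int p) (c * b))"
  have "int p ^ k dvd a * d" "int p ^ k dvd c * b"
    unfolding k_def by (rule multiplicity_dvd'; simp)+
  hence "int p ^ k dvd a * d + c * b" by simp
  hence "multiplicity (int p) (a * d + c * b) \<ge> k" using nz p_gt_1 by (intro multiplicity_geI) auto
  moreover have "pval p x = vp (a * d) - vp (b * d)" unfolding x by (rule pval_frac) (use ab cd in auto)
  moreover have "pval p y = vp (c * b) - vp (b * d)" unfolding y by (rule pval_frac) (use ab cd in auto)
  moreover have "pval p (x + y) = vp (a * d + c * b) - vp (b * d)"
    unfolding s by (rule pval_frac) (use ab cd nz in auto)
  ultimately show ?thesis unfolding k_def by linarith
qed

lemma pval_uminus: "pval p (- x) = pval p x"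
proof (cases "x = 0")
  case False
  then obtain a b where ab: "a \<noteq> 0" "b \<noteq> 0" "x = of_int a / of_int b" using rat_as_frac by blast
  have "pval p (- x) = pval p (of_int (- a) / of_int b)" using ab by simp
  also have "\<dots> = vp (- a) - vp b" by (rule pval_frac) (use ab in auto)
  also have "\<dots> = vp a - vp b" using multiplicity_times_unit_right[of "-1" "int p" a] by simp
  also have "\<dots> = pval p x" using pval_frac[of a b] ab by simp
  finally show ?thesis .
qed simp

lemma pval_1: "pval p 1 = 0"
  using pval_frac[of 1 1] by simp

lemma pval_ppow: "pval p (of_nat p powi k) = k"
proof -
  have nat_pow: "pval p (of_nat p ^ n) = int n" for n
  proof -
    have "(of_nat p ^ n :: rat) = of_int (int p ^ n) / of_int 1" by simp
    thus ?thesis using pval_frac[of "int p ^ n" 1] p_gt_1 prime_elem_p by simp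
  qed
  have inverse: "pval p (inverse y) = - pval p y" if "y \<noteq> 0" for y :: rat
    using pval_mult[of y "inverse y"] pval_1 that by simp
  show ?thesis
  proof (cases "k \<ge> 0")
    case True
    hence "(of_nat p powi k :: rat) = of_nat p ^ nat k" by (simp add: power_int_def)
    thus ?thesis using nat_pow[of "nat k"] True by simp
  next
    case False
    hence "(of_nat p powi k :: rat) = inverse (of_nat p ^ nat (- k))"
      by (simp add: power_int_def power_inverse)
    moreover have "(of_nat p ^ nat (- k) :: rat) \<noteq> 0" using p_gt_1 by simp
    ultimately show ?thesis using nat_pow[of "nat (- k)"] inverse False by simp
  qed
qed

abbreviation pabs :: "rat \<Rightarrow> real" where "pabs \<equiv> padic_abs p"

lemma pabs_nonneg: "pabs x \<ge> 0"
  by (simp add: padic_abs_def)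

lemma pabs_0 [simp]: "pabs 0 = 0"
  by (simp add: padic_abs_def)

lemma pabs_1 [simp]: "pabs 1 = 1"
  using pval_1 p_gt_1 by (simp add: padic_abs_def)

lemma pabs_mult: "pabs (x * y) = pabs x * pabs y"
  by (cases "x = 0 \<or> y = 0") (auto simp: padic_abs_def pval_mult powr_add[symmetric])

lemma pabs_uminus: "pabs (- x) = pabs x"
  by (simp add: padic_abs_def pval_uminus)

lemma pabs_ultra: "pabs (x + y) \<le> max (pabs x) (pabs y)"
proof (cases "x = 0 \<or> y = 0 \<or> x + y = 0")
  case True
  thus ?thesis using pabs_nonneg[of x] pabs_nonneg[of y] by (auto simp: le_max_iff_disj)
next
  case False
  hence "- real_of_int (pval p (x + y)) \<le> max (- real_of_int (pval p x)) (- real_of_int (pval p y))"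
    using pval_add by fastforce
  hence "real p powr (- real_of_int (pval p (x + y)))
         \<le> real p powr max (- real_of_int (pval p x)) (- real_of_int (pval p y))"
    using p_gt_1 by (intro powr_mono) auto
  thus ?thesis using False by (simp add: padic_abs_def max_def split: if_splits)
qed

lemma pabs_triangle: "pabs (x + y) \<le> pabs x + pabs y"
  using pabs_ultra[of x y] pabs_nonneg[of x] pabs_nonneg[of y] by linarith

lemma pabs_diff_ultra: "pabs (x - y) \<le> max (pabs x) (pabs y)"
  using pabs_ultra[of x "- y"] by (simp add: pabs_uminus)

lemma pabs_reverse_triangle: "\<bar>pabs a - pabs b\<bar> \<le> pabs (a - b)"
  using pabs_triangle[of "a - b" b] pabs_triangle[of "b - a" a] pabs_uminus[of "a - b"] by simp

lemma pabs_ppow: "pabs (of_nat p powi k) = real p powr (- real_of_int k)"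
  using p_gt_1 pval_ppow by (simp add: padic_abs_def)

section \<open>Cauchy and null sequences\<close>

abbreviation cau :: "(nat \<Rightarrow> rat) \<Rightarrow> bool" where "cau \<equiv> pcauchy p"

definition null :: "(nat \<Rightarrow> rat) \<Rightarrow> bool" where
  "null X \<longleftrightarrow> (\<lambda>n. pabs (X n)) \<longlonglongrightarrow> 0"

lemma padic_rel_iff: "(X, Y) \<in> padic_rel p \<longleftrightarrow> cau X \<and> cau Y \<and> null (\<lambda>n. X n - Y n)"
  by (simp add: padic_rel_def null_def)

lemma tendsto_0_squeeze:
  assumes "\<And>n. 0 \<le> g n" "\<And>n. g n \<le> h n" "h \<longlonglongrightarrow> 0"
  shows "g \<longlonglongrightarrow> (0 :: real)"
  by (rule tendsto_sandwich[where f = "\<lambda>n. 0" and h = h]) (use assms in auto)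

lemma null_add: "null X \<Longrightarrow> null Y \<Longrightarrow> null (\<lambda>n. X n + Y n)"
  unfolding null_def
  by (rule tendsto_0_squeeze[of _ "\<lambda>n. pabs (X n) + pabs (Y n)"])
     (auto intro: pabs_triangle pabs_nonneg tendsto_add_zero)

lemma null_mult_bounded:
  assumes "null X" "\<And>n. pabs (Y n) \<le> B"
  shows "null (\<lambda>n. X n * Y n)"
  unfolding null_def
proof (rule tendsto_0_squeeze[of _ "\<lambda>n. pabs (X n) * B"])
  show "pabs (X n * Y n) \<le> pabs (X n) * B" for n
    using assms(2)[of n] pabs_nonneg[of "X n"] by (simp add: pabs_mult mult_left_mono)
  have "(\<lambda>n. pabs (X n) * B) \<longlonglongrightarrow> 0 * B"
    by (intro tendsto_mult tendsto_const) (use assms null_def in auto)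
  thus "(\<lambda>n. pabs (X n) * B) \<longlonglongrightarrow> 0" by simp
qed (rule pabs_nonneg)

lemma null_uminus: "null X \<Longrightarrow> null (\<lambda>n. - X n)"
  by (simp add: null_def pabs_uminus)

lemma cau_bounded:
  assumes "cau X"
  obtains B where "\<And>n. pabs (X n) \<le> B"
proof -
  obtain N where N: "\<And>m n. m \<ge> N \<Longrightarrow> n \<ge> N \<Longrightarrow> pabs (X m - X n) < 1"
    using assms unfolding pcauchy_def by (meson zero_less_one)
  define B where "B = pabs (X N) + 1 + (\<Sum>i<N. pabs (X i))"
  have sum_nonneg: "(\<Sum>i<N. pabs (X i)) \<ge> 0" by (intro sum_nonneg pabs_nonneg)
  have "pabs (X n) \<le> B" for n
  proof (cases "n \<ge> N")
    case True
    have "pabs (X n) \<le> pabs (X n - X N) + pabs (X N)" using pabs_triangle[of "X n - X N" "X N"] by simp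
    thus ?thesis using N[OF True order.refl] sum_nonneg unfolding B_def by linarith
  next
    case False
    hence "pabs (X n) \<le> (\<Sum>i<N. pabs (X i))" by (intro member_le_sum pabs_nonneg) auto
    thus ?thesis using pabs_nonneg[of "X N"] unfolding B_def by linarith
  qed
  thus ?thesis using that by blast
qed

lemma cau_const: "cau (\<lambda>n. r)"
  by (simp add: pcauchy_def)

lemma cau_add:
  assumes "cau X" "cau Y"
  shows "cau (\<lambda>n. X n + Y n)"
  unfolding pcauchy_def
proof (intro allI impI)
  fix e :: real assume e: "e > 0"
  obtain N1 where N1: "\<And>m n. m \<ge> N1 \<Longrightarrow> n \<ge> N1 \<Longrightarrow> pabs (X m - X n) < e"
    using assms(1) e unfolding pcauchy_def by meson
  obtain N2 where N2: "\<And>m n. m \<ge> N2 \<Longrightarrow> n \<ge> N2 \<Longrightarrow> pabs (Y m - Y n) < e"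
    using assms(2) e unfolding pcauchy_def by meson
  have "pabs (X m + Y m - (X n + Y n)) < e" if "m \<ge> max N1 N2" "n \<ge> max N1 N2" for m n
    using N1[of m n] N2[of m n] that pabs_ultra[of "X m - X n" "Y m - Y n"]
    by (simp add: algebra_simps)
  thus "\<exists>N. \<forall>m\<ge>N. \<forall>n\<ge>N. pabs (X m + Y m - (X n + Y n)) < e" by blast
qed

lemma cau_uminus: "cau X \<Longrightarrow> cau (\<lambda>n. - X n)"
  using pabs_uminus[of "X m - X n" for m n] by (simp add: pcauchy_def)

lemma cau_diff: "cau X \<Longrightarrow> cau Y \<Longrightarrow> cau (\<lambda>n. X n - Y n)"
  using cau_add[of X "\<lambda>n. - Y n"] cau_uminus[of Y] by simp

lemma cau_mult:
  assumes "cau X" "cau Y"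
  shows "cau (\<lambda>n. X n * Y n)"
  unfolding pcauchy_def
proof (intro allI impI)
  fix e :: real assume e: "e > 0"
  obtain BX where BX: "\<And>n. pabs (X n) \<le> BX" using cau_bounded[OF assms(1)] by blast
  obtain BY where BY: "\<And>n. pabs (Y n) \<le> BY" using cau_bounded[OF assms(2)] by blast
  define B where "B = max 1 (max BX BY)"
  have B: "B > 0" "BX \<le> B" "BY \<le> B" unfolding B_def by auto
  define d where "d = e / B"
  have d: "d > 0" "B * d = e" using e B by (simp_all add: d_def)
  obtain N1 where N1: "\<And>m n. m \<ge> N1 \<Longrightarrow> n \<ge> N1 \<Longrightarrow> pabs (X m - X n) < d"
    using assms(1) d unfolding pcauchy_def by meson
  obtain N2 where N2: "\<And>m n. m \<ge> N2 \<Longrightarrow> n \<ge> N2 \<Longrightarrow> pabs (Y m - Y n) < d"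
    using assms(2) d unfolding pcauchy_def by meson
  have "pabs (X m * Y m - X n * Y n) < e" if "m \<ge> max N1 N2" "n \<ge> max N1 N2" for m n
  proof -
    have "pabs (X m * (Y m - Y n)) \<le> B * pabs (Y m - Y n)"
      unfolding pabs_mult using BX[of m] B pabs_nonneg by (intro mult_right_mono) auto
    also have "\<dots> < B * d" using N2[of m n] that B by simp
    finally have "pabs (X m * (Y m - Y n)) < B * d" .
    moreover have "pabs ((X m - X n) * Y n) \<le> B * pabs (X m - X n)"
      unfolding pabs_mult mult.commute[of "pabs (X m - X n)"] using BY[of n] B pabs_nonneg
      by (intro mult_right_mono) auto
    moreover have "B * pabs (X m - X n) < B * d" using N1[of m n] that B by simp
    moreover have "X m * Y m - X n * Y n = X m * (Y m - Y n) + (X m - X n) * Y n"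
      by (simp add: algebra_simps)
    ultimately show ?thesis using pabs_ultra[of "X m * (Y m - Y n)" "(X m - X n) * Y n"] d by simp
  qed
  thus "\<exists>N. \<forall>m\<ge>N. \<forall>n\<ge>N. pabs (X m * Y m - X n * Y n) < e" by blast
qed

lemma padic_rel_equiv: "equiv {X. cau X} (padic_rel p)"
proof (rule equivI)
  show "padic_rel p \<subseteq> {X. cau X} \<times> {X. cau X}" by (auto simp: padic_rel_iff)
  show "refl_on {X. cau X} (padic_rel p)" by (auto simp: refl_on_def padic_rel_iff null_def)
  show "sym (padic_rel p)" unfolding sym_def padic_rel_iff using null_uminus by fastforce
  show "trans (padic_rel p)" unfolding trans_def padic_rel_iff
  proof (intro allI impI, elim conjE)
    fix X Y Z assume "cau X" "cau Z" "null (\<lambda>n. X n - Y n)" "null (\<lambda>n. Y n - Z n)"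
    thus "cau X \<and> cau Z \<and> null (\<lambda>n. X n - Z n)"
      using null_add[of "\<lambda>n. X n - Y n" "\<lambda>n. Y n - Z n"] by simp
  qed
qed

lemma padic_rel_add:
  "(X, X') \<in> padic_rel p \<Longrightarrow> (Y, Y') \<in> padic_rel p \<Longrightarrow>
   ((\<lambda>n. X n + Y n), (\<lambda>n. X' n + Y' n)) \<in> padic_rel p"
  unfolding padic_rel_iff using cau_add null_add[of "\<lambda>n. X n - X' n" "\<lambda>n. Y n - Y' n"]
  by (simp add: algebra_simps)

lemma padic_rel_diff:
  "(X, X') \<in> padic_rel p \<Longrightarrow> (Y, Y') \<in> padic_rel p \<Longrightarrow>
   ((\<lambda>n. X n - Y n), (\<lambda>n. X' n - Y' n)) \<in> padic_rel p"
  unfolding padic_rel_iff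
  using cau_diff null_add[of "\<lambda>n. X n - X' n" "\<lambda>n. - (Y n - Y' n)"] null_uminus[of "\<lambda>n. Y n - Y' n"]
  by (simp add: algebra_simps)

lemma padic_rel_mult:
  assumes "(X, X') \<in> padic_rel p" "(Y, Y') \<in> padic_rel p"
  shows "((\<lambda>n. X n * Y n), (\<lambda>n. X' n * Y' n)) \<in> padic_rel p"
proof -
  have c: "cau X" "cau X'" "cau Y" "cau Y'" "null (\<lambda>n. X n - X' n)" "null (\<lambda>n. Y n - Y' n)"
    using assms padic_rel_iff by auto
  obtain BX where BX: "\<And>n. pabs (X n) \<le> BX" using cau_bounded[OF c(1)] by blast
  obtain BY where BY: "\<And>n. pabs (Y' n) \<le> BY" using cau_bounded[OF c(4)] by blast
  have "null (\<lambda>n. (Y n - Y' n) * X n + (X n - X' n) * Y' n)"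
    by (rule null_add[OF null_mult_bounded[OF c(6) BX] null_mult_bounded[OF c(5) BY]])
  moreover have "(\<lambda>n. (Y n - Y' n) * X n + (X n - X' n) * Y' n) = (\<lambda>n. X n * Y n - X' n * Y' n)"
    by (simp add: algebra_simps)
  ultimately show ?thesis unfolding padic_rel_iff using c cau_mult by simp
qed

definition seq_norm :: "(nat \<Rightarrow> rat) \<Rightarrow> real" where
  "seq_norm X = lim (\<lambda>n. pabs (X n))"

lemma seq_norm_lim:
  assumes "cau X"
  shows "(\<lambda>n. pabs (X n)) \<longlonglongrightarrow> seq_norm X"
proof -
  have "Cauchy (\<lambda>n. pabs (X n))"
  proof (rule CauchyI)
    fix e :: real assume "e > 0"
    then obtain N where "\<And>m n. m \<ge> N \<Longrightarrow> n \<ge> N \<Longrightarrow> pabs (X m - X n) < e"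
      using assms unfolding pcauchy_def by meson
    thus "\<exists>M. \<forall>m\<ge>M. \<forall>n\<ge>M. norm (pabs (X m) - pabs (X n)) < e"
      using pabs_reverse_triangle by (metis order.strict_trans1 real_norm_def)
  qed
  thus ?thesis unfolding seq_norm_def by (simp add: Cauchy_convergent_iff convergent_LIMSEQ_iff)
qed

lemma seq_norm_resp:
  assumes "(X, Y) \<in> padic_rel p"
  shows "seq_norm X = seq_norm Y"
proof -
  have c: "cau X" "cau Y" "null (\<lambda>n. X n - Y n)" using assms padic_rel_iff by auto
  have "(\<lambda>n. \<bar>pabs (X n) - pabs (Y n)\<bar>) \<longlonglongrightarrow> 0"
    by (rule tendsto_0_squeeze[of _ "\<lambda>n. pabs (X n - Y n)"]) (use pabs_reverse_triangle c(3) null_def in auto)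
  hence "(\<lambda>n. pabs (X n) - pabs (Y n)) \<longlonglongrightarrow> 0" by (simp add: tendsto_rabs_zero_iff)
  moreover have "(\<lambda>n. pabs (X n) - pabs (Y n)) \<longlonglongrightarrow> seq_norm X - seq_norm Y"
    by (intro tendsto_diff seq_norm_lim c)
  ultimately show ?thesis using LIMSEQ_unique by fastforce
qed

lemma seq_norm_mult:
  assumes "cau X" "cau Y"
  shows "seq_norm (\<lambda>n. X n * Y n) = seq_norm X * seq_norm Y"
  using LIMSEQ_unique seq_norm_lim[OF cau_mult[OF assms]] tendsto_mult[OF seq_norm_lim seq_norm_lim, OF assms]
  unfolding pabs_mult by blast

lemma seq_norm_add:
  assumes "cau X" "cau Y"
  shows "seq_norm (\<lambda>n. X n + Y n) \<le> max (seq_norm X) (seq_norm Y)"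
  using seq_norm_lim[OF cau_add[OF assms]] tendsto_max[OF seq_norm_lim seq_norm_lim, OF assms] pabs_ultra
  by (intro LIMSEQ_le) auto

lemma seq_norm_diff:
  assumes "cau X" "cau Y"
  shows "seq_norm (\<lambda>n. X n - Y n) \<le> max (seq_norm X) (seq_norm Y)"
  using seq_norm_lim[OF cau_diff[OF assms]] tendsto_max[OF seq_norm_lim seq_norm_lim, OF assms] pabs_diff_ultra
  by (intro LIMSEQ_le) auto

lemma seq_norm_const: "seq_norm (\<lambda>n. r) = pabs r"
  unfolding seq_norm_def by simp

lemma seq_norm_nonneg: "cau X \<Longrightarrow> seq_norm X \<ge> 0"
  using seq_norm_lim pabs_nonneg by (intro LIMSEQ_le_const[of "\<lambda>n. pabs (X n)"]) auto

section \<open>Arithmetic in Q_p via representatives\<close>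

abbreviation cls :: "(nat \<Rightarrow> rat) \<Rightarrow> qp" where "cls \<equiv> qp_class p"

lemma cls_in_Qp: "cau X \<Longrightarrow> cls X \<in> Qp p"
  unfolding qp_class_def Qp_def by (rule quotientI) simp

lemma cls_eq_iff: "cau X \<Longrightarrow> cau Y \<Longrightarrow> cls X = cls Y \<longleftrightarrow> (X, Y) \<in> padic_rel p"
  unfolding qp_class_def by (rule eq_equiv_class_iff[OF padic_rel_equiv]) auto

lemma Qp_cases:
  assumes "A \<in> Qp p"
  obtains X where "cau X" "A = cls X"
  using assms unfolding Qp_def qp_class_def by (elim quotientE) auto

lemma rep_rel:
  assumes "cau X"
  shows "(qp_rep (cls X), X) \<in> padic_rel p"
proof -
  have "X \<in> cls X" unfolding qp_class_def using equiv_class_self[OF padic_rel_equiv] assms by auto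
  hence "qp_rep (cls X) \<in> cls X" unfolding qp_rep_def by (rule someI[where P = "\<lambda>Y. Y \<in> cls X"])
  hence "(X, qp_rep (cls X)) \<in> padic_rel p" unfolding qp_class_def by simp
  thus ?thesis using padic_rel_equiv by (meson equivE symD)
qed

lemma rep_cau: "cau X \<Longrightarrow> cau (qp_rep (cls X))"
  using rep_rel padic_rel_iff by blast

lemma qp_add_cls: "cau X \<Longrightarrow> cau Y \<Longrightarrow> qp_add p (cls X) (cls Y) = cls (\<lambda>n. X n + Y n)"
  unfolding qp_add_def using rep_cau padic_rel_add[OF rep_rel rep_rel]
  by (subst cls_eq_iff) (auto intro: cau_add)

lemma qp_diff_cls: "cau X \<Longrightarrow> cau Y \<Longrightarrow> qp_diff p (cls X) (cls Y) = cls (\<lambda>n. X n - Y n)"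
  unfolding qp_diff_def using rep_cau padic_rel_diff[OF rep_rel rep_rel]
  by (subst cls_eq_iff) (auto intro: cau_diff)

lemma qp_mult_cls: "cau X \<Longrightarrow> cau Y \<Longrightarrow> qp_mult p (cls X) (cls Y) = cls (\<lambda>n. X n * Y n)"
  unfolding qp_mult_def using rep_cau padic_rel_mult[OF rep_rel rep_rel]
  by (subst cls_eq_iff) (auto intro: cau_mult)

lemma qp_norm_cls: "cau X \<Longrightarrow> qp_norm p (cls X) = seq_norm X"
  using seq_norm_resp[OF rep_rel] unfolding qp_norm_def seq_norm_def by simp

lemma qp_of_rat_cls: "qp_of_rat p r = cls (\<lambda>n. r)"
  by (simp add: qp_of_rat_def)

abbreviation Q :: "qp set" where "Q \<equiv> Qp p"
abbreviation q0 :: qp where "q0 \<equiv> qp_of_rat p 0"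
abbreviation q1 :: qp where "q1 \<equiv> qp_of_rat p 1"

lemma qp_of_rat_in [simp]: "qp_of_rat p r \<in> Q"
  unfolding qp_of_rat_cls by (rule cls_in_Qp[OF cau_const])

lemma qp_add_in [simp]: "A \<in> Q \<Longrightarrow> B \<in> Q \<Longrightarrow> qp_add p A B \<in> Q"
  by (elim Qp_cases) (simp add: qp_add_cls cls_in_Qp cau_add)

lemma qp_mult_in [simp]: "A \<in> Q \<Longrightarrow> B \<in> Q \<Longrightarrow> qp_mult p A B \<in> Q"
  by (elim Qp_cases) (simp add: qp_mult_cls cls_in_Qp cau_mult)

lemma qp_diff_in [simp]: "A \<in> Q \<Longrightarrow> B \<in> Q \<Longrightarrow> qp_diff p A B \<in> Q"
  by (elim Qp_cases) (simp add: qp_diff_cls cls_in_Qp cau_diff)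

lemma qp_add_0_right [simp]: "A \<in> Q \<Longrightarrow> qp_add p A q0 = A"
  by (elim Qp_cases) (simp add: qp_of_rat_cls qp_add_cls cau_const)

lemma qp_add_0_left [simp]: "A \<in> Q \<Longrightarrow> qp_add p q0 A = A"
  by (elim Qp_cases) (simp add: qp_of_rat_cls qp_add_cls cau_const)

lemma qp_mult_0_right [simp]: "A \<in> Q \<Longrightarrow> qp_mult p A q0 = q0"
  by (elim Qp_cases) (simp add: qp_of_rat_cls qp_mult_cls cau_const)

lemma qp_mult_0_left [simp]: "A \<in> Q \<Longrightarrow> qp_mult p q0 A = q0"
  by (elim Qp_cases) (simp add: qp_of_rat_cls qp_mult_cls cau_const)

lemma qp_mult_1_right [simp]: "A \<in> Q \<Longrightarrow> qp_mult p A q1 = A"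
  by (elim Qp_cases) (simp add: qp_of_rat_cls qp_mult_cls cau_const)

lemma qp_mult_1_left [simp]: "A \<in> Q \<Longrightarrow> qp_mult p q1 A = A"
  by (elim Qp_cases) (simp add: qp_of_rat_cls qp_mult_cls cau_const)

lemma qp_diff_0_0 [simp]: "qp_diff p q0 q0 = q0"
  by (simp add: qp_of_rat_cls qp_diff_cls cau_const)

lemma qp_mult_commute: "A \<in> Q \<Longrightarrow> B \<in> Q \<Longrightarrow> qp_mult p A B = qp_mult p B A"
  by (elim Qp_cases) (simp add: qp_mult_cls mult.commute)

lemma qp_mult_assoc:
  "A \<in> Q \<Longrightarrow> B \<in> Q \<Longrightarrow> C \<in> Q \<Longrightarrow> qp_mult p (qp_mult p A B) C = qp_mult p A (qp_mult p B C)"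
  by (elim Qp_cases) (simp add: qp_mult_cls cau_mult mult.assoc)

lemma qp_mult_of_rat: "qp_mult p (qp_of_rat p r) (qp_of_rat p s) = qp_of_rat p (r * s)"
  by (simp add: qp_of_rat_cls qp_mult_cls cau_const)

lemma qp_norm_mult: "A \<in> Q \<Longrightarrow> B \<in> Q \<Longrightarrow> qp_norm p (qp_mult p A B) = qp_norm p A * qp_norm p B"
  by (elim Qp_cases) (simp add: qp_mult_cls qp_norm_cls cau_mult seq_norm_mult)

lemma qp_norm_add: "A \<in> Q \<Longrightarrow> B \<in> Q \<Longrightarrow> qp_norm p (qp_add p A B) \<le> max (qp_norm p A) (qp_norm p B)"
  by (elim Qp_cases) (simp add: qp_add_cls qp_norm_cls cau_add seq_norm_add)

lemma qp_norm_diff: "A \<in> Q \<Longrightarrow> B \<in> Q \<Longrightarrow> qp_norm p (qp_diff p A B) \<le> max (qp_norm p A) (qp_norm p B)"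
  by (elim Qp_cases) (simp add: qp_diff_cls qp_norm_cls cau_diff seq_norm_diff)

lemma qp_norm_of_rat [simp]: "qp_norm p (qp_of_rat p r) = pabs r"
  by (simp add: qp_of_rat_cls qp_norm_cls cau_const seq_norm_const)

lemma qp_norm_nonneg: "A \<in> Q \<Longrightarrow> qp_norm p A \<ge> 0"
  by (elim Qp_cases) (simp add: qp_norm_cls seq_norm_nonneg)

section \<open>The balls p^a Z_p\<close>

definition rad :: "int \<Rightarrow> real" where
  "rad a = real p powr (- real_of_int a)"

definition ppow :: "int \<Rightarrow> qp" where
  "ppow a = qp_of_rat p (of_nat p powi a)"

definition in_ball :: "int \<Rightarrow> qp \<Rightarrow> bool" where
  "in_ball a u \<longleftrightarrow> u \<in> Q \<and> qp_norm p u \<le> rad a"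

lemma rad_pos: "rad a > 0"
  using p_gt_1 by (simp add: rad_def)

lemma rad_nonneg [simp]: "rad a \<ge> 0"
  using rad_pos[of a] by simp

lemma rad_add: "rad a * rad b = rad (a + b)"
  by (simp add: rad_def powr_add[symmetric] algebra_simps)

lemma rad_0 [simp]: "rad 0 = 1"
  using p_gt_1 by (simp add: rad_def)

lemma qp_norm_ppow [simp]: "qp_norm p (ppow a) = rad a"
  by (simp add: ppow_def pabs_ppow rad_def)

lemma ppow_in [simp]: "ppow a \<in> Q"
  by (simp add: ppow_def)

lemma ppow_0 [simp]: "ppow 0 = q1"
  by (simp add: ppow_def)

lemma ppow_mult: "qp_mult p (ppow a) (ppow b) = ppow (a + b)"
  using p_gt_1 by (simp add: ppow_def qp_mult_of_rat power_int_add)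

lemma ppow_unscale: "u \<in> Q \<Longrightarrow> qp_mult p (qp_mult p u (ppow (- k))) (ppow k) = u"
  by (simp add: qp_mult_assoc ppow_mult)

lemma Zp_eq: "Zp p = {u. in_ball 0 u}"
  by (auto simp: Zp_def in_ball_def)

lemma pZp_eq: "pZp p a = {u. in_ball a u}"
proof (intro set_eqI iffI)
  fix u assume "u \<in> pZp p a"
  then obtain z where z: "in_ball 0 z" "u = qp_mult p (ppow a) z"
    unfolding pZp_def ppow_def[symmetric] Zp_eq by auto
  hence "qp_norm p u = rad a * qp_norm p z" by (simp add: in_ball_def qp_norm_mult)
  also have "\<dots> \<le> rad a" using z(1) rad_pos[of a] by (simp add: in_ball_def)
  finally show "u \<in> {u. in_ball a u}" using z by (simp add: in_ball_def)
next
  fix u assume "u \<in> {u. in_ball a u}"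
  hence u: "u \<in> Q" "qp_norm p u \<le> rad a" by (auto simp: in_ball_def)
  define z where "z = qp_mult p (ppow (- a)) u"
  have "qp_norm p z = rad (- a) * qp_norm p u" using u by (simp add: z_def qp_norm_mult)
  also have "\<dots> \<le> rad (- a) * rad a" using u rad_pos[of "- a"] by simp
  finally have "in_ball 0 z" using u rad_add[of "- a" a] by (simp add: z_def in_ball_def)
  moreover have "qp_mult p (ppow a) z = u"
    using u by (simp add: z_def qp_mult_assoc[symmetric] ppow_mult)
  ultimately show "u \<in> pZp p a" unfolding pZp_def ppow_def[symmetric] Zp_eq by auto
qed

lemma in_ball_mult: "in_ball a u \<Longrightarrow> in_ball b v \<Longrightarrow> a + b = c \<Longrightarrow> in_ball c (qp_mult p u v)"
  unfolding in_ball_def using qp_norm_nonneg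
  by (auto simp: qp_norm_mult rad_add[symmetric] intro!: mult_mono)

lemma in_ball_add: "in_ball a u \<Longrightarrow> in_ball a v \<Longrightarrow> in_ball a (qp_add p u v)"
  unfolding in_ball_def using qp_norm_add[of u v] by auto

lemma in_ball_diff: "in_ball a u \<Longrightarrow> in_ball a v \<Longrightarrow> in_ball a (qp_diff p u v)"
  unfolding in_ball_def using qp_norm_diff[of u v] by auto

lemma in_ball_0 [simp]: "in_ball a q0"
  by (simp add: in_ball_def)

lemma in_ball_ppow [simp]: "in_ball a (ppow a)"
  by (simp add: in_ball_def)

lemma in_ball_unscale: "in_ball k u \<Longrightarrow> qp_mult p u (ppow (- k)) \<in> Zp p"
  unfolding Zp_eq using in_ball_mult[OF _ in_ball_ppow, of k u "- k"] by simp

lemma in_ball_if_scaled: "u \<in> Q \<Longrightarrow> qp_norm p (qp_mult p u (ppow k)) \<le> 1 \<Longrightarrow> in_ball (- k) u"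
proof -
  assume u: "u \<in> Q" "qp_norm p (qp_mult p u (ppow k)) \<le> 1"
  hence "qp_norm p u * rad k * rad (- k) \<le> rad (- k)" using rad_pos[of "- k"] by (simp add: qp_norm_mult)
  thus ?thesis using u by (simp add: in_ball_def mult.assoc rad_add)
qed

lemma in_ball_if_scaled_left: "u \<in> Q \<Longrightarrow> qp_norm p (qp_mult p (ppow k) u) \<le> 1 \<Longrightarrow> in_ball (- k) u"
  using in_ball_if_scaled[of u k] qp_mult_commute[of u "ppow k"] by simp

section \<open>Coordinates of octonions and Z_p-spans\<close>

lemma zorn_cases:
  obtains a y1 y2 y3 z1 z2 z3 d where "x = Zorn a (y1, y2, y3) (z1, z2, z3) d"
  by (cases x) auto

lemmas vec_ops_defs = vdot_def vcross_def vadd_def vsub_def vsmul_def v1_def v2_def v3_def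

fun coordwise :: "(nat \<Rightarrow> qp \<Rightarrow> bool) \<Rightarrow> qp zorn \<Rightarrow> bool" where
  "coordwise P (Zorn a (y1, y2, y3) (z1, z2, z3) d) =
     (P 0 a \<and> P 1 y1 \<and> P 2 y2 \<and> P 3 y3 \<and> P 4 z1 \<and> P 5 z2 \<and> P 6 z3 \<and> P 7 d)"

lemma coordwise_mono: "coordwise P x \<Longrightarrow> (\<And>i c. P i c \<Longrightarrow> P' i c) \<Longrightarrow> coordwise P' x"
  by (cases x rule: zorn_cases) auto

lemma Oct_coordwise: "x \<in> Oct p \<longleftrightarrow> coordwise (\<lambda>i c. c \<in> Q) x"
  by (cases x rule: zorn_cases) (simp add: Oct_def)

lemma zspan_coordwise:
  assumes S: "\<And>x. x \<in> S \<Longrightarrow> coordwise P x" and zero: "\<And>i. P i q0"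
    and step: "\<And>i c u v. c \<in> C \<Longrightarrow> P i u \<Longrightarrow> P i v \<Longrightarrow> P i (qp_add p (qp_mult p c u) v)"
    and x: "x \<in> zspan p C S"
  shows "coordwise P x"
proof -
  have "coordwise P (foldr (zadd p) (map2 (zsmul p) cs xs) (zzero p))"
    if "set xs \<subseteq> S" "length cs = length xs" "set cs \<subseteq> C" for xs cs
    using that
  proof (induction xs arbitrary: cs)
    case Nil
    thus ?case using zero by (simp add: zzero_def Let_def)
  next
    case (Cons s xs)
    then obtain c cs' where cs: "cs = c # cs'" by (cases cs) auto
    obtain a y1 y2 y3 z1 z2 z3 d where s: "s = Zorn a (y1, y2, y3) (z1, z2, z3) d"
      by (rule zorn_cases)
    obtain a' y1' y2' y3' z1' z2' z3' d'
      where r: "foldr (zadd p) (map2 (zsmul p) cs' xs) (zzero p) = Zorn a' (y1', y2', y3') (z1', z2', z3') d'"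
      by (rule zorn_cases)
    have "coordwise P (Zorn a' (y1', y2', y3') (z1', z2', z3') d')"
      using Cons cs by (simp flip: r)
    moreover have "coordwise P s" "c \<in> C" using Cons cs S by auto
    ultimately show ?case
      unfolding cs s by (simp add: r vec_ops_defs step)
  qed
  thus ?thesis using x unfolding zspan_def by blast
qed

lemma zspan_mono: "S \<subseteq> T \<Longrightarrow> zspan p C S \<subseteq> zspan p C T"
  unfolding zspan_def by blast

lemma Lambda_coordwise: "x \<in> Lambda p as \<longleftrightarrow> coordwise (\<lambda>i. in_ball (as ! i)) x"
  by (cases x rule: zorn_cases) (simp add: Lambda_def pZp_eq)

abbreviation zero3 :: vec3 where "zero3 \<equiv> (q0, q0, q0)"

definition lambda_basis :: "int list \<Rightarrow> qp zorn list" where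
  "lambda_basis as =
    [Zorn (ppow (as ! 0)) zero3 zero3 q0,
     Zorn q0 (ppow (as ! 1), q0, q0) zero3 q0, Zorn q0 (q0, ppow (as ! 2), q0) zero3 q0,
     Zorn q0 (q0, q0, ppow (as ! 3)) zero3 q0,
     Zorn q0 zero3 (ppow (as ! 4), q0, q0) q0, Zorn q0 zero3 (q0, ppow (as ! 5), q0) q0,
     Zorn q0 zero3 (q0, q0, ppow (as ! 6)) q0,
     Zorn q0 zero3 zero3 (ppow (as ! 7))]"

lemma lambda_basis_combination:
  assumes "c0 \<in> Q" "c1 \<in> Q" "c2 \<in> Q" "c3 \<in> Q" "c4 \<in> Q" "c5 \<in> Q" "c6 \<in> Q" "c7 \<in> Q"
  shows "foldr (zadd p) (map2 (zsmul p) [c0, c1, c2, c3, c4, c5, c6, c7] (lambda_basis as)) (zzero p) =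
    Zorn (qp_mult p c0 (ppow (as ! 0)))
         (qp_mult p c1 (ppow (as ! 1)), qp_mult p c2 (ppow (as ! 2)), qp_mult p c3 (ppow (as ! 3)))
         (qp_mult p c4 (ppow (as ! 4)), qp_mult p c5 (ppow (as ! 5)), qp_mult p c6 (ppow (as ! 6)))
         (qp_mult p c7 (ppow (as ! 7)))"
  using assms by (simp add: lambda_basis_def zzero_def Let_def vec_ops_defs)

lemma in_span_lambda_basis:
  assumes "coordwise (\<lambda>i u. u \<in> Q \<and> qp_mult p u (ppow (- (as ! i))) \<in> C) x"
  shows "x \<in> zspan p C (set (lambda_basis as))"
proof -
  obtain a y1 y2 y3 z1 z2 z3 d where x: "x = Zorn a (y1, y2, y3) (z1, z2, z3) d"
    by (rule zorn_cases)
  let ?scale = "\<lambda>i u. qp_mult p u (ppow (- (as ! i)))"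
  let ?cs = "[?scale 0 a, ?scale 1 y1, ?scale 2 y2, ?scale 3 y3,
              ?scale 4 z1, ?scale 5 z2, ?scale 6 z3, ?scale 7 d]"
  have "set ?cs \<subseteq> C" using assms by (simp add: x)
  moreover have "x = foldr (zadd p) (map2 (zsmul p) ?cs (lambda_basis as)) (zzero p)"
    using assms unfolding x by (subst lambda_basis_combination) (simp_all add: ppow_unscale)
  ultimately show ?thesis
    unfolding zspan_def by (intro CollectI exI[of _ "lambda_basis as"] exI[of _ ?cs]) (simp add: lambda_basis_def)
qed

lemma Lambda_is_lattice: "is_lattice p (Lambda p as)"
  unfolding is_lattice_def
proof (intro conjI)
  have ball_step: "in_ball a (qp_add p (qp_mult p c u) v)" if "c \<in> Zp p" "in_ball a u" "in_ball a v" for a c u v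
    using that by (intro in_ball_add in_ball_mult[of 0 c a u]) (auto simp: Zp_eq)
  show sub_Oct: "Lambda p as \<subseteq> Oct p"
    using coordwise_mono[of "\<lambda>i. in_ball (as ! i)" _ "\<lambda>i c. c \<in> Q"]
    by (auto simp: Lambda_coordwise Oct_coordwise in_ball_def)
  have basis_sub: "set (lambda_basis as) \<subseteq> Lambda p as"
    by (simp add: lambda_basis_def Lambda_coordwise)
  have "Lambda p as \<subseteq> zspan p (Zp p) (set (lambda_basis as))"
  proof
    fix x assume "x \<in> Lambda p as"
    hence "coordwise (\<lambda>i u. u \<in> Q \<and> qp_mult p u (ppow (- (as ! i))) \<in> Zp p) x"
      unfolding Lambda_coordwise by (rule coordwise_mono) (simp add: in_ball_unscale in_ball_def)
    thus "x \<in> zspan p (Zp p) (set (lambda_basis as))" by (rule in_span_lambda_basis)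
  qed
  moreover have "zspan p (Zp p) (Lambda p as) \<subseteq> Lambda p as"
    using zspan_coordwise[of "Lambda p as" "\<lambda>i. in_ball (as ! i)" "Zp p"] ball_step
    by (auto simp: Lambda_coordwise)
  ultimately show "\<exists>S. finite S \<and> S \<subseteq> Lambda p as \<and> Lambda p as = zspan p (Zp p) S"
    using basis_sub zspan_mono[OF basis_sub, of "Zp p"] by (intro exI[of _ "set (lambda_basis as)"]) auto
  have "Oct p \<subseteq> zspan p Q (set (lambda_basis as))"
    by (auto simp: Oct_coordwise intro!: in_span_lambda_basis elim!: coordwise_mono)
  moreover have "zspan p Q (Oct p) \<subseteq> Oct p"
    using zspan_coordwise[of "Oct p" "\<lambda>i c. c \<in> Q" Q] by (auto simp: Oct_coordwise)
  ultimately show "zspan p Q (Lambda p as) = Oct p"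
    using zspan_mono[OF basis_sub, of Q] zspan_mono[OF sub_Oct, of Q] by blast
qed

abbreviation Lam :: "qp zorn set" where "Lam \<equiv> Lambda p [0, 1, -1, 0, -1, 1, 0, 0]"

lemma Lam_iff:
  "Zorn a (y1, y2, y3) (z1, z2, z3) d \<in> Lam \<longleftrightarrow>
     in_ball 0 a \<and> in_ball 1 y1 \<and> in_ball (-1) y2 \<and> in_ball 0 y3 \<and>
     in_ball (-1) z1 \<and> in_ball 1 z2 \<and> in_ball 0 z3 \<and> in_ball 0 d"
  by (simp add: Lambda_coordwise)

text \<open>Closure under multiplication: every coordinate of a product is a sum of products of
  coordinates whose exponents add up exactly to the exponent of the target coordinate.\<close>
lemma Lam_mult_closed:
  assumes "x \<in> Lam" "y \<in> Lam"
  shows "zmult p x y \<in> Lam"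
proof -
  obtain a y1 y2 y3 z1 z2 z3 d where x: "x = Zorn a (y1, y2, y3) (z1, z2, z3) d"
    by (rule zorn_cases)
  obtain a' y1' y2' y3' z1' z2' z3' d' where y: "y = Zorn a' (y1', y2', y3') (z1', z2', z3') d'"
    by (rule zorn_cases)
  have h: "in_ball 0 a" "in_ball 1 y1" "in_ball (-1) y2" "in_ball 0 y3"
          "in_ball (-1) z1" "in_ball 1 z2" "in_ball 0 z3" "in_ball 0 d"
          "in_ball 0 a'" "in_ball 1 y1'" "in_ball (-1) y2'" "in_ball 0 y3'"
          "in_ball (-1) z1'" "in_ball 1 z2'" "in_ball 0 z3'" "in_ball 0 d'"
    using assms unfolding x y Lam_iff by auto
  show ?thesis unfolding x y
    by (simp add: Lam_iff vec_ops_defs)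
       (intro conjI in_ball_add in_ball_diff; (rule in_ball_mult, rule h, rule h, simp))
qed

lemma Lam_is_order: "is_order p Lam"
  unfolding is_order_def using Lambda_is_lattice Lam_mult_closed
  by (simp add: zone_def Let_def Lam_iff in_ball_def)

section \<open>Boundedness and integrality in orders\<close>

fun coord_norm_sum :: "qp zorn \<Rightarrow> real" where
  "coord_norm_sum (Zorn a (y1, y2, y3) (z1, z2, z3) d) =
     qp_norm p a + qp_norm p y1 + qp_norm p y2 + qp_norm p y3 +
     qp_norm p z1 + qp_norm p z2 + qp_norm p z3 + qp_norm p d"

lemma coord_norm_sum_bound:
  assumes "x \<in> Oct p" "coord_norm_sum x \<le> M"
  shows "coordwise (\<lambda>i c. c \<in> Q \<and> qp_norm p c \<le> M) x"
proof -
  obtain a y1 y2 y3 z1 z2 z3 d where x: "x = Zorn a (y1, y2, y3) (z1, z2, z3) d"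
    by (rule zorn_cases)
  have Q: "a \<in> Q" "y1 \<in> Q" "y2 \<in> Q" "y3 \<in> Q" "z1 \<in> Q" "z2 \<in> Q" "z3 \<in> Q" "d \<in> Q"
    using assms(1) by (simp_all add: x Oct_coordwise)
  show ?thesis
    using assms(2) Q[THEN qp_norm_nonneg] by (simp add: x Q)
qed

text \<open>The coordinates of a lattice are bounded, since it is spanned over Z_p by finitely
  many octonions.\<close>
lemma lattice_coords_bounded:
  assumes "is_lattice p L"
  obtains M where "\<And>x. x \<in> L \<Longrightarrow> coordwise (\<lambda>i c. c \<in> Q \<and> qp_norm p c \<le> M) x"
proof -
  obtain S where S: "finite S" "S \<subseteq> L" "L = zspan p (Zp p) S" and L: "L \<subseteq> Oct p"
    using assms unfolding is_lattice_def by blast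
  define M where "M = (\<Sum>s\<in>S. coord_norm_sum s)"
  have nonneg: "coord_norm_sum s \<ge> 0" if "s \<in> Oct p" for s
    using that qp_norm_nonneg by (cases s rule: zorn_cases) (simp add: Oct_coordwise)
  have M: "M \<ge> 0" using S L nonneg unfolding M_def by (intro sum_nonneg) blast
  have generators: "coordwise (\<lambda>i c. c \<in> Q \<and> qp_norm p c \<le> M) s" if s: "s \<in> S" for s
  proof (rule coord_norm_sum_bound)
    show "s \<in> Oct p" using s S L by blast
    show "coord_norm_sum s \<le> M" unfolding M_def using S L s nonneg by (intro member_le_sum) blast+
  qed
  have step: "qp_add p (qp_mult p c u) v \<in> Q \<and> qp_norm p (qp_add p (qp_mult p c u) v) \<le> M"
    if "c \<in> Zp p" "u \<in> Q \<and> qp_norm p u \<le> M" "v \<in> Q \<and> qp_norm p v \<le> M" for c u v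
  proof -
    have c: "c \<in> Q" "qp_norm p c \<le> 1" using that(1) by (auto simp: Zp_def)
    have "qp_norm p (qp_mult p c u) \<le> 1 * M"
      unfolding qp_norm_mult[OF c(1) conjunct1[OF that(2)]]
      using c that(2) qp_norm_nonneg by (intro mult_mono) auto
    thus ?thesis using qp_norm_add[of "qp_mult p c u" v] c that by auto
  qed
  have "coordwise (\<lambda>i c. c \<in> Q \<and> qp_norm p c \<le> M) x" if "x \<in> L" for x
    by (rule zspan_coordwise[OF generators _ step]) (use M S(3) that in auto)
  thus ?thesis using that by blast
qed

lemma bounded_powers_le_1:
  fixes r :: real
  assumes "\<And>n. r ^ Suc n \<le> M" "r \<ge> 0"
  shows "r \<le> 1"
proof (rule ccontr)
  assume "\<not> r \<le> 1"
  hence r: "r > 1" by simp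
  then obtain n where "M < r ^ n" using real_arch_pow by blast
  moreover have "r ^ n \<le> r ^ Suc n" using r by simp
  ultimately show False using assms(1)[of n] by simp
qed

text \<open>If a multiplicative copy emb of Q_p meets a multiplicatively closed set L only in
  elements of bounded norm, then every t with emb t \<in> L is integral: all powers of t
  are then represented in L.\<close>
lemma embedded_integral:
  fixes emb :: "qp \<Rightarrow> qp zorn"
  assumes emb_mult: "\<And>s t. s \<in> Q \<Longrightarrow> t \<in> Q \<Longrightarrow> zmult p (emb s) (emb t) = emb (qp_mult p s t)"
    and closed: "\<And>x y. x \<in> L \<Longrightarrow> y \<in> L \<Longrightarrow> zmult p x y \<in> L"
    and bounded: "\<And>c. emb c \<in> L \<Longrightarrow> qp_norm p c \<le> M"
    and t: "t \<in> Q" "emb t \<in> L"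
  shows "qp_norm p t \<le> 1"
proof (rule bounded_powers_le_1)
  have "\<exists>c. c \<in> Q \<and> emb c \<in> L \<and> qp_norm p c = qp_norm p t ^ Suc n" for n
  proof (induction n)
    case 0
    show ?case using t by auto
  next
    case (Suc n)
    then obtain c where c: "c \<in> Q" "emb c \<in> L" "qp_norm p c = qp_norm p t ^ Suc n" by blast
    have "emb (qp_mult p c t) \<in> L" using closed[OF c(2) t(2)] emb_mult[OF c(1) t(1)] by simp
    thus ?case using c t by (intro exI[of _ "qp_mult p c t"]) (simp add: qp_norm_mult)
  qed
  thus "qp_norm p t ^ Suc n \<le> M" for n using bounded by metis
  show "qp_norm p t \<ge> 0" using t(1) by (rule qp_norm_nonneg)
qed

fun ztop :: "qp zorn \<Rightarrow> qp" where "ztop (Zorn a v w d) = a"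
fun zbot :: "qp zorn \<Rightarrow> qp" where "zbot (Zorn a v w d) = d"

definition E11 :: "qp \<Rightarrow> qp zorn" where "E11 t = Zorn t zero3 zero3 q0"
definition E22 :: "qp \<Rightarrow> qp zorn" where "E22 t = Zorn q0 zero3 zero3 t"

lemma E11_mult: "s \<in> Q \<Longrightarrow> t \<in> Q \<Longrightarrow> zmult p (E11 s) (E11 t) = E11 (qp_mult p s t)"
  by (simp add: E11_def vec_ops_defs)

lemma E22_mult: "s \<in> Q \<Longrightarrow> t \<in> Q \<Longrightarrow> zmult p (E22 s) (E22 t) = E22 (qp_mult p s t)"
  by (simp add: E22_def vec_ops_defs)

lemma E11_sandwich: "y \<in> Oct p \<Longrightarrow> zmult p (zmult p (E11 q1) y) (E11 q1) = E11 (ztop y)"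
  by (cases y rule: zorn_cases)
     (simp add: Oct_coordwise E11_def vec_ops_defs)

lemma E22_sandwich: "y \<in> Oct p \<Longrightarrow> zmult p (zmult p (E22 q1) y) (E22 q1) = E22 (zbot y)"
  by (cases y rule: zorn_cases)
     (simp add: Oct_coordwise E22_def vec_ops_defs)

lemma order_ztop_integral:
  assumes L: "is_order p L" and E: "E11 q1 \<in> L" and y: "y \<in> L"
  shows "qp_norm p (ztop y) \<le> 1"
proof -
  have closed: "\<And>x y. x \<in> L \<Longrightarrow> y \<in> L \<Longrightarrow> zmult p x y \<in> L" and Oct: "L \<subseteq> Oct p"
    using L unfolding is_order_def is_lattice_def by blast+
  obtain M where M: "\<And>x. x \<in> L \<Longrightarrow> coordwise (\<lambda>i c. c \<in> Q \<and> qp_norm p c \<le> M) x"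
    using L lattice_coords_bounded unfolding is_order_def by blast
  have bounded: "qp_norm p c \<le> M" if "E11 c \<in> L" for c
    using M[OF that] by (simp add: E11_def)
  have coord_Q: "ztop y \<in> Q" using y Oct by (cases y rule: zorn_cases) (auto simp: Oct_coordwise)
  have corner: "E11 (ztop y) \<in> L" using closed[OF closed[OF E y] E] E11_sandwich y Oct by auto
  show ?thesis by (rule embedded_integral[of E11 L M]) (fact E11_mult closed bounded coord_Q corner)+
qed

lemma order_zbot_integral:
  assumes L: "is_order p L" and E: "E22 q1 \<in> L" and y: "y \<in> L"
  shows "qp_norm p (zbot y) \<le> 1"
proof -
  have closed: "\<And>x y. x \<in> L \<Longrightarrow> y \<in> L \<Longrightarrow> zmult p x y \<in> L" and Oct: "L \<subseteq> Oct p"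
    using L unfolding is_order_def is_lattice_def by blast+
  obtain M where M: "\<And>x. x \<in> L \<Longrightarrow> coordwise (\<lambda>i c. c \<in> Q \<and> qp_norm p c \<le> M) x"
    using L lattice_coords_bounded unfolding is_order_def by blast
  have bounded: "qp_norm p c \<le> M" if "E22 c \<in> L" for c
    using M[OF that] by (simp add: E22_def)
  have coord_Q: "zbot y \<in> Q" using y Oct by (cases y rule: zorn_cases) (auto simp: Oct_coordwise)
  have corner: "E22 (zbot y) \<in> L" using closed[OF closed[OF E y] E] E22_sandwich y Oct by auto
  show ?thesis by (rule embedded_integral[of E22 L M]) (fact E22_mult closed bounded coord_Q corner)+
qed

section \<open>Maximality\<close>

text \<open>Multiplying by a basis vector of Lam moves an off-diagonal coordinate, rescaled by a
  power of p, into the top-left corner; integrality there gives the bound defining Lam.\<close>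
lemma Lam_maximal:
  assumes L: "is_order p L" and sub: "Lam \<subseteq> L"
  shows "L \<subseteq> Lam"
proof
  fix x assume x: "x \<in> L"
  have closed: "\<And>x y. x \<in> L \<Longrightarrow> y \<in> L \<Longrightarrow> zmult p x y \<in> L" and Oct: "L \<subseteq> Oct p"
    using L unfolding is_order_def is_lattice_def by blast+
  have "E11 q1 \<in> Lam" "E22 q1 \<in> Lam" by (simp_all add: E11_def E22_def Lam_iff in_ball_def)
  hence "E11 q1 \<in> L" "E22 q1 \<in> L" using sub by blast+
  note top = order_ztop_integral[OF L \<open>E11 q1 \<in> L\<close>] and bot = order_zbot_integral[OF L \<open>E22 q1 \<in> L\<close>]
  obtain a y1 y2 y3 z1 z2 z3 d where xs: "x = Zorn a (y1, y2, y3) (z1, z2, z3) d"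
    and Q: "a \<in> Q" "y1 \<in> Q" "y2 \<in> Q" "y3 \<in> Q" "z1 \<in> Q" "z2 \<in> Q" "z3 \<in> Q" "d \<in> Q"
    using x Oct by (cases x rule: zorn_cases) (auto simp: Oct_coordwise)
  txt \<open>The basis vectors of Lam that pair with y1, y2, y3 (resp. z1, z2, z3) into the
    top-left slot of a product.\<close>
  have f: "Zorn q0 zero3 (ppow (-1), q0, q0) q0 \<in> L" "Zorn q0 zero3 (q0, ppow 1, q0) q0 \<in> L"
          "Zorn q0 zero3 (q0, q0, ppow 0) q0 \<in> L" "Zorn q0 (ppow 1, q0, q0) zero3 q0 \<in> L"
          "Zorn q0 (q0, ppow (-1), q0) zero3 q0 \<in> L" "Zorn q0 (q0, q0, ppow 0) zero3 q0 \<in> L"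
    using sub by (auto simp: Lam_iff subset_iff simp del: ppow_0)
  have "in_ball 0 a" "in_ball 0 d" using top[OF x] bot[OF x] Q by (simp_all add: xs in_ball_def)
  moreover have "in_ball (- (-1)) y1" "in_ball (- 1) y2" "in_ball (- 0) y3"
    using top[OF closed[OF x f(1)]] top[OF closed[OF x f(2)]] top[OF closed[OF x f(3)]] Q
    by (intro in_ball_if_scaled; simp add: xs vec_ops_defs del: ppow_0)+
  moreover have "in_ball (- 1) z1" "in_ball (- (-1)) z2" "in_ball (- 0) z3"
    using top[OF closed[OF f(4) x]] top[OF closed[OF f(5) x]] top[OF closed[OF f(6) x]] Q
    by (intro in_ball_if_scaled_left; simp add: xs vec_ops_defs del: ppow_0)+
  ultimately show "x \<in> Lam" unfolding xs Lam_iff by simp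
qed

end

theorem mainTheorem14:
  fixes p :: nat
  assumes "prime p" and "odd p"
  shows "is_maximal_order p (Lambda p [0, 1, -1, 0, -1, 1, 0, 0])"
proof -
  interpret padic p by unfold_locales (rule assms(1))
  show ?thesis unfolding is_maximal_order_def using Lam_is_order Lam_maximal by blast
qed

end
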